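(* Let $n \in \mathbb{N}_0$ and let $P(x) \in \mathbb{Z}[x]$ be a monic $n$-good polynomial of even degree. If $P(x) = A(x^2) - xB(x^2)$ for some $A(x), B(x) \in \mathbb{Z}[x]$, then $2^n$ divides $B(x)$ in $\mathbb{Z}[x]$.
   Context: For $P, Q, M \in \mathbb{Z}[x]$ with $M \ne 0$, $P \equiv Q \pmod{M}$ means $M$ divides $P - Q$ in $\mathbb{Z}[x]$. For $n \in \mathbb{N}_0$, a polynomial $P(x) \in \mathbb{Z}[x]$ is $n$-good if $P(x^{2^m}) \equiv P(x)^{2^m} \pmod{2^{m+1}}$ for every $m \in \{0, 1, \dots, n\}$. *)

theory Defs
  imports "HOL-Computational_Algebra.Polynomial"
begin

definition n_good :: "nat \<Rightarrow> int poly \<Rightarrow> bool" where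
  "n_good n P \<longleftrightarrow>
     (\<forall>m \<in> {0..n}. [:(2::int) ^ (m + 1):] dvd
        (pcompose P (monom 1 (2 ^ m)) - P ^ (2 ^ m)))"

end

theory Submission
  imports Defs
begin

text \<open>
  By induction on \<open>k \<le> n\<close> we show \<open>2^k | B\<close>. Write \<open>B = 2^k C\<close> and \<open>r = 2^k\<close>.
  Goodness at \<open>m = k\<close> says that \<open>P^r\<close> is congruent modulo \<open>2^(k+1)\<close> to
  \<open>P(x^r) = A(x^2r) - 2^k x^r C(x^2r)\<close>; squaring, \<open>P^2r\<close> is congruent modulo \<open>2^(k+2)\<close> to
  \<open>P(x^r)^2\<close>, which goodness at \<open>m = k + 1\<close> compares with \<open>P(x^2r)\<close>. In the difference
  only the cross term \<open>2^(k+1) x^r (AC)(x^2r)\<close> has exponents that are odd multiples of \<open>r\<close>,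
  so \<open>2 | AC\<close>. As \<open>P\<close> is monic of even degree, \<open>A\<close> has an odd coefficient, and since
  \<open>2\<close> is prime in \<open>\<int>[x]\<close> we get \<open>2 | C\<close>.
\<close>

lemma pcompose_power_left: "(p ^ n) \<circ>\<^sub>p q = (p \<circ>\<^sub>p q) ^ n"
  for p q :: "'a::comm_semiring_1 poly"
  by (induction n) (simp_all add: pcompose_1 pcompose_mult)

lemma pcompose_numeral [simp]: "numeral m \<circ>\<^sub>p q = numeral m"
  for q :: "'a::comm_semiring_1 poly"
  by (simp add: numeral_poly)

lemma pcompose_monom_monom: "monom c a \<circ>\<^sub>p monom 1 b = monom c (a * b)"
  for c :: "'a::comm_semiring_1"
proof -
  have "[:0, 1:] \<circ>\<^sub>p q = q" for q :: "'a poly"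
    by (simp add: pcompose_pCons)
  then show ?thesis
    by (simp add: monom_altdef pcompose_smult pcompose_power_left power_mult[symmetric] mult.commute)
qed

lemma pcompose_pcompose_monom: "p \<circ>\<^sub>p monom 1 a \<circ>\<^sub>p monom 1 b = p \<circ>\<^sub>p monom 1 (a * b)"
  for p :: "'a::comm_semiring_1 poly"
  by (simp add: pcompose_assoc[symmetric] pcompose_monom_monom)

lemma coeff_pcompose_monom:
  fixes p :: "'a::comm_semiring_1 poly"
  assumes "0 < N"
  shows "coeff (p \<circ>\<^sub>p monom 1 N) k = (if N dvd k then coeff p (k div N) else 0)"
  using assms
proof (induction p arbitrary: k)
  case 0 then show ?case by simp
next
  case (pCons a p)
  have "coeff (pCons a p \<circ>\<^sub>p monom 1 N) k =
     (if k = 0 then a else 0) + (if k < N then 0 else coeff (p \<circ>\<^sub>p monom 1 N) (k - N))"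
    by (simp add: pcompose_pCons coeff_monom_mult coeff_pCons split: nat.splits)
  also have "\<dots> = (if N dvd k then coeff (pCons a p) (k div N) else 0)"
  proof (cases "k < N")
    case True
    then show ?thesis using pCons.prems by (auto simp: dvd_imp_le)
  next
    case False
    then obtain l where l: "k = N + l" by (metis le_iff_add not_le)
    then show ?thesis using False pCons.prems pCons.IH[of l] by (auto simp: coeff_pCons)
  qed
  finally show ?case .
qed

lemma two_power_dvd_square_diff:
  fixes f g :: "'a::comm_ring_1"
  assumes "2 ^ j dvd f - g" and "0 < j"
  shows "2 ^ Suc j dvd f\<^sup>2 - g\<^sup>2"
proof -
  have "2 dvd f - g"
    using assms by (meson dvd_power dvd_trans)
  then have "2 dvd (f - g) + 2 * g"
    by (rule dvd_add) simp
  with assms(1) have "2 ^ j * 2 dvd (f - g) * ((f - g) + 2 * g)"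
    by (rule mult_dvd_mono)
  moreover have "(f - g) * ((f - g) + 2 * g) = f\<^sup>2 - g\<^sup>2"
    by (simp add: algebra_simps power2_eq_square)
  ultimately show ?thesis
    by (simp add: mult.commute)
qed

lemma const_dvd_odd_part:
  fixes h g :: "'a::{comm_semiring_1,semiring_no_zero_divisors} poly"
  assumes "0 < r" and "[:c:] dvd h \<circ>\<^sub>p monom 1 (2 * r) + monom 1 r * g \<circ>\<^sub>p monom 1 (2 * r)"
  shows "[:c:] dvd g"
proof -
  have "coeff (h \<circ>\<^sub>p monom 1 (2 * r) + monom 1 r * g \<circ>\<^sub>p monom 1 (2 * r)) (2 * r * i + r) = coeff g i" for i
  proof -
    have "\<not> 2 * r dvd 2 * r * i + r"
    proof
      assume "2 * r dvd 2 * r * i + r"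
      then have "2 * r dvd r"
        by (simp add: dvd_add_right_iff)
      with assms(1) show False
        by (auto dest: dvd_imp_le)
    qed
    then show ?thesis
      using assms(1) by (simp add: coeff_pcompose_monom coeff_monom_mult)
  qed
  then show ?thesis
    using assms(2) by (metis const_poly_dvd_iff)
qed

lemma good_steps_imp_two_dvd_mult:
  fixes A C P :: "int poly"
  assumes P: "P = A \<circ>\<^sub>p monom 1 2 - monom 1 1 * (2 ^ k * C) \<circ>\<^sub>p monom 1 2"
    and good_k: "2 ^ (k + 1) dvd P \<circ>\<^sub>p monom 1 (2 ^ k) - P ^ 2 ^ k"
    and good_Suc_k: "2 ^ (k + 2) dvd P \<circ>\<^sub>p monom 1 (2 ^ (k + 1)) - P ^ 2 ^ (k + 1)"
  shows "2 dvd A * C"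
proof -
  define r where "r = (2::nat) ^ k"
  define F where "F = A \<circ>\<^sub>p monom 1 (2 * r)"
  define c where "c = C \<circ>\<^sub>p monom 1 (2 * r)"
  define G where "G = monom 1 r * c"
  define h where "h = P - A\<^sup>2 - (2 ^ k)\<^sup>2 * monom 1 1 * C\<^sup>2"
  have "0 < r"
    by (simp add: r_def)
  have P_r: "P \<circ>\<^sub>p monom 1 r = F - 2 ^ k * G"
    by (simp add: P F_def G_def c_def pcompose_diff pcompose_mult pcompose_power_left
        pcompose_pcompose_monom pcompose_monom_monom mult.commute)
  have "2 ^ Suc (Suc k) dvd (F - 2 ^ k * G)\<^sup>2 - (P ^ r)\<^sup>2"
    by (rule two_power_dvd_square_diff) (use good_k P_r in \<open>simp_all add: r_def\<close>)
  then have square: "2 ^ (k + 2) dvd (F - 2 ^ k * G)\<^sup>2 - P ^ 2 ^ (k + 1)"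
    by (simp add: r_def power_mult[symmetric] mult.commute)
  have "2 ^ (k + 2) dvd P \<circ>\<^sub>p monom 1 (2 * r) - P ^ 2 ^ (k + 1)"
    using good_Suc_k by (simp add: r_def)
  then have "2 ^ (k + 2) dvd (P \<circ>\<^sub>p monom 1 (2 * r) - P ^ 2 ^ (k + 1)) - ((F - 2 ^ k * G)\<^sup>2 - P ^ 2 ^ (k + 1))"
    using square by (rule dvd_diff)
  also have "\<dots> = h \<circ>\<^sub>p monom 1 (2 * r) + monom 1 r * (2 ^ (k + 1) * (A * C)) \<circ>\<^sub>p monom 1 (2 * r)"
  proof -
    have h_comp: "h \<circ>\<^sub>p monom 1 (2 * r) = P \<circ>\<^sub>p monom 1 (2 * r) - F\<^sup>2 - (2 ^ k)\<^sup>2 * (monom 1 (2 * r) * c\<^sup>2)"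
      by (simp add: h_def F_def c_def pcompose_diff pcompose_mult pcompose_power_left pcompose_monom_monom)
    have odd_comp: "monom 1 r * (2 ^ (k + 1) * (A * C)) \<circ>\<^sub>p monom 1 (2 * r) = 2 ^ (k + 1) * (F * G)"
      by (simp add: F_def G_def c_def pcompose_mult pcompose_power_left algebra_simps)
    have "G\<^sup>2 = monom 1 (2 * r) * c\<^sup>2"
      by (simp add: G_def power_mult_distrib monom_power mult.commute)
    then have "(F - 2 ^ k * G)\<^sup>2 = F\<^sup>2 - 2 ^ (k + 1) * (F * G) + (2 ^ k)\<^sup>2 * (monom 1 (2 * r) * c\<^sup>2)"
      by (simp add: power2_eq_square algebra_simps)
    then show ?thesis
      unfolding h_comp odd_comp by (simp add: algebra_simps)
  qed
  finally have "[:2 ^ (k + 2):] dvd h \<circ>\<^sub>p monom 1 (2 * r) + monom 1 r * (2 ^ (k + 1) * (A * C)) \<circ>\<^sub>p monom 1 (2 * r)"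
    by (simp add: numeral_poly poly_const_pow)
  then have "[:2 ^ (k + 2):] dvd 2 ^ (k + 1) * (A * C)"
    using \<open>0 < r\<close> by (rule const_dvd_odd_part[rotated])
  then have "2 ^ (k + 1) * 2 dvd 2 ^ (k + 1) * (A * C :: int poly)"
    by (simp add: numeral_poly poly_const_pow)
  then show ?thesis
    by (subst (asm) dvd_times_left_cancel_iff) simp_all
qed

lemma coeff_even_odd_decomposition_even:
  fixes A B :: "'a::comm_ring_1 poly"
  shows "coeff (A \<circ>\<^sub>p monom 1 2 - monom 1 1 * B \<circ>\<^sub>p monom 1 2) (2 * i) = coeff A i"
proof -
  have "\<not> 2 dvd 2 * i - 1" if "i > 0"
    using that by presburger
  then show ?thesis
    by (auto simp: coeff_pcompose_monom coeff_monom_mult)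
qed

lemma two_not_dvd_even_part:
  fixes P A B :: "int poly"
  assumes "odd (lead_coeff P)" and "even (degree P)"
    and "P = A \<circ>\<^sub>p monom 1 2 - monom 1 1 * B \<circ>\<^sub>p monom 1 2"
  shows "\<not> 2 dvd A"
proof
  assume "2 dvd A"
  then have "2 dvd coeff A (degree P div 2)"
    by (simp add: numeral_poly const_poly_dvd_iff)
  also have "coeff A (degree P div 2) = lead_coeff P"
    using assms(2,3) coeff_even_odd_decomposition_even[of A B "degree P div 2"] by simp
  finally show False
    using assms(1) by simp
qed

lemma n_good_altdef:
  "n_good n P \<longleftrightarrow> (\<forall>m\<le>n. 2 ^ (m + 1) dvd P \<circ>\<^sub>p monom 1 (2 ^ m) - P ^ 2 ^ m)"
  by (auto simp: n_good_def numeral_poly poly_const_pow mult.commute)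

theorem lemma3p7:
  fixes n :: nat and P A B :: "int poly"
  assumes "lead_coeff P = 1"
    and "n_good n P"
    and "even (degree P)"
    and "P = pcompose A (monom 1 2) - monom 1 1 * pcompose B (monom 1 2)"
  shows "[:(2::int) ^ n:] dvd B"
proof -
  have A_odd: "\<not> 2 dvd A"
    using assms(1,3,4) by (intro two_not_dvd_even_part) simp_all
  have good: "2 ^ (m + 1) dvd P \<circ>\<^sub>p monom 1 (2 ^ m) - P ^ 2 ^ m" if "m \<le> n" for m
    using assms(2) that by (simp add: n_good_altdef)
  have "2 ^ k dvd B" if "k \<le> n" for k
    using that
  proof (induction k)
    case 0
    show ?case by simp
  next
    case (Suc k)
    then have "2 ^ k dvd B"
      by simp
    then obtain C where B: "B = 2 ^ k * C" ..
    have "2 dvd A * C"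
      using good_steps_imp_two_dvd_mult[of P A k C] assms(4) B good[of k] good[of "k + 1"] Suc.prems
      by simp
    moreover have "prime_elem (2 :: int poly)"
      by (simp add: numeral_poly prime_elem_const_poly_iff)
    ultimately have "2 dvd C"
      using A_odd by (simp add: prime_elem_dvd_mult_iff)
    then show ?case
      unfolding B by (simp add: mult_dvd_mono)
  qed
  then show ?thesis
    by (simp add: numeral_poly poly_const_pow)
qed

end
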